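(* Let $X$ be a polyhedral normed space with closed unit ball $B_X$ and dual unit ball $B_{X^*}$. Let $y\in X$ and $E=J(y)$. Then $L_E=\{x\in X: \phi(x)=\psi(x)\text{ for all }\phi,\psi\in E\}$ equals the linear span of the face $F_E=\{x\in B_X: \phi(x)=1\text{ for all }\phi\in E\}$.
   Context: A polyhedral normed space is a finite-dimensional real normed space whose closed unit ball has finitely many extreme points. The duality map is $J(x)=\{\phi\in B_{X^*}: \phi(x)=\|x\|\}$. The linear span of the empty set is $\{0\}$. *)

theory Defs
  imports "HOL-Analysis.Analysis"
begin

definition polyhedral_normed_space :: "'a::real_normed_vector itself \<Rightarrow> bool" where
  "polyhedral_normed_space TYPE('a) \<longleftrightarrow>
     (\<exists>B::'a set. finite B \<and> span B = UNIV) \<and>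
     finite {x::'a. x extreme_point_of cball 0 1}"

definition dual_ball :: "('a::real_normed_vector \<Rightarrow> real) set" where
  "dual_ball = {\<phi>. linear \<phi> \<and> (\<forall>x. \<bar>\<phi> x\<bar> \<le> norm x)}"

definition duality_map :: "'a::real_normed_vector \<Rightarrow> ('a \<Rightarrow> real) set" where
  "duality_map x = {\<phi> \<in> dual_ball. \<phi> x = norm x}"

definition L_set :: "('a::real_normed_vector \<Rightarrow> real) set \<Rightarrow> 'a set" where
  "L_set E = {x. \<forall>\<phi>\<in>E. \<forall>\<psi>\<in>E. \<phi> x = \<psi> x}"

definition F_face :: "('a::real_normed_vector \<Rightarrow> real) set \<Rightarrow> 'a set" where
  "F_face E = {x \<in> cball 0 1. \<forall>\<phi>\<in>E. \<phi> x = 1}"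

end

theory Submission
  imports Defs
begin

text \<open>Clearly \<open>F\<^sub>E \<subseteq> L\<^sub>E\<close> and \<open>L\<^sub>E\<close> is a subspace. Conversely, if \<open>x \<in> L\<^sub>E\<close> is not in the
span of \<open>F\<^sub>E\<close>, choose a linear \<open>g\<close> vanishing on \<open>F\<^sub>E\<close> with \<open>g x = 1\<close>. Averaging finitely many
elements of \<open>E\<close> gives \<open>\<phi> \<in> E\<close> with \<open>\<phi> p < 1\<close> at each of the finitely many extreme points
\<open>p \<notin> F\<^sub>E\<close>; for small \<open>\<epsilon> > 0\<close> the functional \<open>\<phi> + \<epsilon> g\<close> is still at most 1 on all
extreme points, hence on the unit ball, and it still attains \<open>\<parallel>y\<parallel>\<close> at \<open>y\<close>. So it lies in \<open>E\<close>
but differs from \<open>\<phi>\<close> at \<open>x\<close>, a contradiction.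

Finite dimension enters through a bound \<open>m \<Sum>\<^sub>b \<bar>x\<^sub>b\<bar> \<le> \<parallel>x\<parallel>\<close> on the basis coordinates, which
makes linear functionals continuous and the unit ball compact. A linear functional then attains
its maximum over the ball at an extreme point: among its maximisers, one maximising the strictly
convex sum of squared coordinates is extreme.\<close>

lemma finite_spanning_imp_basis:
  fixes S :: "'a::real_vector set"
  assumes "finite S" "span S = UNIV"
  obtains B :: "'a set" where "finite B" "independent B" "span B = UNIV"
proof -
  obtain B where B: "B \<subseteq> S" "independent B" "S \<subseteq> span B"
    using maximal_independent_subset[of S] by blast
  have "span S \<subseteq> span B" using B(3) by (rule span_minimal) simp
  with assms(2) have "span B = UNIV" by blast
  moreover have "finite B" using B(1) assms(1) by (rule finite_subset)
  ultimately show ?thesis using that B(2) by blast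
qed

lemma linear_functional_separating_from_span:
  fixes x :: "'a::real_vector"
  assumes "x \<notin> span S"
  obtains g :: "'a \<Rightarrow> real" where "linear g" "g x = 1" "\<And>z. z \<in> span S \<Longrightarrow> g z = 0"
proof -
  obtain I where I: "I \<subseteq> span S" "independent I" "span S \<subseteq> span I"
    using maximal_independent_subset by blast
  have "span I = span S"
    using I by (simp add: span_minimal subset_antisym)
  then have "x \<notin> span I" "independent (insert x I)"
    using assms I(2) by (simp_all add: independent_insertI)
  then obtain g :: "'a \<Rightarrow> real"
    where g: "linear g" "\<And>z. z \<in> insert x I \<Longrightarrow> g z = (if z = x then 1 else 0)"
    using linear_independent_extend[of "insert x I" "\<lambda>z. if z = x then 1 else 0"] by blast
  have "g z = 0" if "z \<in> I" for z
    using g(2) that \<open>x \<notin> span I\<close> span_base by fastforce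
  then have "g z = 0" if "z \<in> span S" for z
    using linear_eq_0_on_span[OF g(1)] that \<open>span I = span S\<close> by blast
  then show ?thesis using that g by simp
qed

lemma convex_sum_weights_le_1:
  fixes C :: "'a::real_vector set"
  assumes "finite I" "convex C" "0 \<in> C" "\<And>i. i \<in> I \<Longrightarrow> w i \<ge> 0" "sum w I \<le> 1"
    "\<And>i. i \<in> I \<Longrightarrow> y i \<in> C"
  shows "(\<Sum>i\<in>I. w i *\<^sub>R y i) \<in> C"
proof (cases "sum w I = 0")
  case True
  then have "\<forall>i\<in>I. w i = 0" using assms(1,4) sum_nonneg_eq_0_iff by blast
  then show ?thesis using assms(3) by simp
next
  case False
  define t where "t = sum w I"
  have t: "t > 0" using False assms(4) sum_nonneg[of I w] unfolding t_def by force
  have z: "(\<Sum>i\<in>I. (w i / t) *\<^sub>R y i) \<in> C"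
    using assms t by (intro convex_sum) (auto simp: t_def sum_divide_distrib[symmetric])
  have "(\<Sum>i\<in>I. w i *\<^sub>R y i) = (1 - t) *\<^sub>R 0 + t *\<^sub>R (\<Sum>i\<in>I. (w i / t) *\<^sub>R y i)"
    using t by (simp add: scaleR_sum_right)
  also have "\<dots> \<in> C"
    using convexD_alt[OF assms(2) assms(3) z, of t] t assms(5) unfolding t_def by simp
  finally show ?thesis .
qed

lemma span_unit_cball: "span (cball (0::'a::real_normed_vector) 1) = UNIV"
proof -
  have "x \<in> span (cball 0 1)" for x :: 'a
  proof (cases "x = 0")
    case False
    then have "norm x *\<^sub>R (x /\<^sub>R norm x) \<in> span (cball (0::'a) 1)"
      by (intro span_scale span_base) simp
    with False show ?thesis by simp
  qed (simp add: span_zero)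
  then show ?thesis by blast
qed

context
  fixes B :: "'a::real_normed_vector set"
  assumes finite_basis: "finite B" and independent_basis: "independent B"
    and span_basis: "span B = UNIV"
begin

abbreviation coord :: "'a \<Rightarrow> 'a \<Rightarrow> real" where
  "coord b x \<equiv> representation B x b"

lemma linear_coord: "linear (coord b)"
  by (rule linearI) (simp_all add: independent_basis span_basis representation_add
      representation_scale)

lemma coord_expansion: "(\<Sum>b\<in>B. coord b x *\<^sub>R b) = x"
  using finite_basis independent_basis span_basis by (intro sum_representation_eq) auto

lemma coord_basis: "b' \<in> B \<Longrightarrow> coord b b' = (if b = b' then 1 else 0)"
  using representation_basis[OF independent_basis] by simp

lemma coord_scale: "coord b (r *\<^sub>R x) = r * coord b x"
  using linear_scale[OF linear_coord] by simp

lemma zero_notin_convex_hull_signed_basis: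
  assumes \<sigma>: "\<And>b. b \<in> B \<Longrightarrow> \<sigma> b \<in> {-1, 1}"
  shows "0 \<notin> convex hull ((\<lambda>b. \<sigma> b *\<^sub>R b) ` B)"
proof
  define l where "l x = (\<Sum>b\<in>B. \<sigma> b * coord b x)" for x
  have lin: "linear l"
  proof (rule linearI)
    show "l (x + y) = l x + l y" for x y
      unfolding l_def linear_add[OF linear_coord] by (simp add: distrib_left sum.distrib)
    show "l (r *\<^sub>R x) = r *\<^sub>R l x" for r x
      unfolding l_def coord_scale by (simp add: sum_distrib_left mult.left_commute)
  qed
  have "l (\<sigma> b' *\<^sub>R b') = 1" if "b' \<in> B" for b'
  proof -
    have "l (\<sigma> b' *\<^sub>R b') = (\<Sum>b\<in>B. \<sigma> b * (\<sigma> b' * (if b = b' then 1 else 0)))"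
      unfolding l_def coord_scale using coord_basis[OF that] by simp
    also have "\<dots> = \<sigma> b' * \<sigma> b'"
      using that finite_basis by (simp add: if_distrib sum.delta' cong: if_cong)
    finally show ?thesis using \<sigma>[OF that] by auto
  qed
  moreover have "convex {x. l x = 1}"
    using convex_linear_vimage[OF lin convex_singleton[of 1]] by (simp add: vimage_def)
  ultimately have "convex hull ((\<lambda>b. \<sigma> b *\<^sub>R b) ` B) \<subseteq> {x. l x = 1}"
    by (intro hull_minimal) auto
  moreover assume "0 \<in> convex hull ((\<lambda>b. \<sigma> b *\<^sub>R b) ` B)"
  ultimately show False using linear_0[OF lin] by auto
qed

text \<open>\<open>K\<close> is the \<open>\<ell>\<^sup>1\<close> unit sphere in coordinates: the union of the convex hulls of the
signed basis vectors.\<close>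

lemma compact_l1_unit_sphere:
  obtains K where "compact K" "0 \<notin> K"
    "\<And>x. (\<Sum>b\<in>B. \<bar>coord b x\<bar>) > 0 \<Longrightarrow> x /\<^sub>R (\<Sum>b\<in>B. \<bar>coord b x\<bar>) \<in> K"
proof
  define Sig where "Sig = PiE B (\<lambda>_. {-1, 1::real})"
  define K where "K = (\<Union>\<sigma>\<in>Sig. convex hull ((\<lambda>b. \<sigma> b *\<^sub>R b) ` B))"
  have "finite Sig" unfolding Sig_def using finite_basis by (simp add: finite_PiE)
  then show "compact K" unfolding K_def
    using finite_basis by (intro compact_UN finite_imp_compact_convex_hull) auto
  show "0 \<notin> K"
  proof
    assume "0 \<in> K"
    then obtain \<sigma> where "\<sigma> \<in> Sig" "0 \<in> convex hull ((\<lambda>b. \<sigma> b *\<^sub>R b) ` B)"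
      unfolding K_def by blast
    moreover have "\<sigma> b \<in> {-1, 1}" if "b \<in> B" for b
      using \<open>\<sigma> \<in> Sig\<close> that unfolding Sig_def by blast
    ultimately show False using zero_notin_convex_hull_signed_basis by blast
  qed
  fix x assume pos: "(\<Sum>b\<in>B. \<bar>coord b x\<bar>) > 0"
  define s where "s = (\<Sum>b\<in>B. \<bar>coord b x\<bar>)"
  define z where "z = x /\<^sub>R s"
  define \<sigma> where "\<sigma> = (\<lambda>b. if b \<in> B then (if coord b z \<ge> 0 then 1 else -1::real) else undefined)"
  have \<sigma>: "\<sigma> \<in> Sig" unfolding Sig_def \<sigma>_def by (auto simp: PiE_iff extensional_def)
  have "coord b z = coord b x / s" for b
    unfolding z_def coord_scale by (simp add: field_simps)
  then have sum1: "(\<Sum>b\<in>B. \<bar>coord b z\<bar>) = 1"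
    using pos unfolding s_def by (simp add: sum_divide_distrib[symmetric])
  have "z = (\<Sum>b\<in>B. coord b z *\<^sub>R b)" by (rule coord_expansion[symmetric])
  also have "\<dots> = (\<Sum>b\<in>B. \<bar>coord b z\<bar> *\<^sub>R (\<sigma> b *\<^sub>R b))"
    by (rule sum.cong) (auto simp: \<sigma>_def)
  also have "\<dots> \<in> convex hull ((\<lambda>b. \<sigma> b *\<^sub>R b) ` B)"
    using finite_basis sum1 by (intro convex_sum) (auto intro!: hull_inc)
  finally show "x /\<^sub>R (\<Sum>b\<in>B. \<bar>coord b x\<bar>) \<in> K"
    using \<sigma> unfolding K_def z_def s_def by blast
qed

lemma coord_l1_le_norm: "\<exists>m>0. \<forall>x. m * (\<Sum>b\<in>B. \<bar>coord b x\<bar>) \<le> norm x"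
proof -
  obtain K where K: "compact K" "0 \<notin> K"
    and normalized: "\<And>x. (\<Sum>b\<in>B. \<bar>coord b x\<bar>) > 0 \<Longrightarrow> x /\<^sub>R (\<Sum>b\<in>B. \<bar>coord b x\<bar>) \<in> K"
    using compact_l1_unit_sphere by blast
  show ?thesis
  proof (cases "K = {}")
    case True
    then have "(\<Sum>b\<in>B. \<bar>coord b x\<bar>) = 0" for x
      using normalized[of x] sum_nonneg[of B "\<lambda>b. \<bar>coord b x\<bar>"] by fastforce
    then show ?thesis by (intro exI[of _ 1]) auto
  next
    case False
    obtain k where k: "k \<in> K" "\<And>z. z \<in> K \<Longrightarrow> norm k \<le> norm z"
      using continuous_attains_inf[OF K(1) False continuous_on_norm_id] by blast
    have "norm k * (\<Sum>b\<in>B. \<bar>coord b x\<bar>) \<le> norm x" for x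
    proof (cases "(\<Sum>b\<in>B. \<bar>coord b x\<bar>) > 0")
      case True
      then show ?thesis
        using k(2)[OF normalized[OF True]] by (simp add: field_simps)
    next
      case False
      then have "(\<Sum>b\<in>B. \<bar>coord b x\<bar>) = 0"
        using sum_nonneg[of B "\<lambda>b. \<bar>coord b x\<bar>"] by linarith
      then show ?thesis by simp
    qed
    moreover have "norm k > 0" using k(1) K(2) by auto
    ultimately show ?thesis by blast
  qed
qed

lemma linear_imp_bounded_linear:
  fixes f :: "'a \<Rightarrow> 'b::real_normed_vector"
  assumes "linear f"
  shows "bounded_linear f"
proof -
  obtain m where m: "m > 0" "\<And>x. m * (\<Sum>b\<in>B. \<bar>coord b x\<bar>) \<le> norm x"
    using coord_l1_le_norm by blast
  define C where "C = (\<Sum>b\<in>B. norm (f b))"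
  have C: "C \<ge> 0" unfolding C_def by (simp add: sum_nonneg)
  have "norm (f x) \<le> norm x * (C / m)" for x
  proof -
    have "f x = f (\<Sum>b\<in>B. coord b x *\<^sub>R b)" by (simp only: coord_expansion)
    also have "\<dots> = (\<Sum>b\<in>B. coord b x *\<^sub>R f b)"
      by (simp add: linear_sum[OF assms] linear_scale[OF assms])
    finally have "norm (f x) \<le> (\<Sum>b\<in>B. \<bar>coord b x\<bar> * norm (f b))"
      by (simp add: order_trans[OF norm_sum])
    also have "\<dots> \<le> (\<Sum>b\<in>B. (\<Sum>b\<in>B. \<bar>coord b x\<bar>) * norm (f b))"
      using finite_basis by (intro sum_mono mult_right_mono member_le_sum) auto
    also have "\<dots> = (\<Sum>b\<in>B. \<bar>coord b x\<bar>) * C" unfolding C_def by (simp add: sum_distrib_left)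
    also have "\<dots> \<le> (norm x / m) * C"
      using m C by (intro mult_right_mono) (simp_all add: pos_le_divide_eq mult.commute)
    finally show ?thesis by simp
  qed
  then show ?thesis
    using linear_add[OF assms] linear_scale[OF assms] by (intro bounded_linear_intro[where K="C/m"])
qed

lemma compact_unit_cball: "compact (cball (0::'a) 1)"
proof -
  obtain m where m: "m > 0" "\<And>x. m * (\<Sum>b\<in>B. \<bar>coord b x\<bar>) \<le> norm x"
    using coord_l1_le_norm by blast
  define W where "W = insert 0 ((\<lambda>b. (1/m) *\<^sub>R b) ` B \<union> (\<lambda>b. (-1/m) *\<^sub>R b) ` B)"
  have "cball 0 1 \<subseteq> convex hull W"
  proof
    fix x :: 'a assume x: "x \<in> cball 0 1"
    define v where "v b = (if coord b x \<ge> 0 then 1/m else -1/m) *\<^sub>R b" for b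
    have "x = (\<Sum>b\<in>B. (m * \<bar>coord b x\<bar>) *\<^sub>R v b)"
      unfolding v_def using m(1)
      by (intro sym[OF trans[OF sum.cong[OF refl] coord_expansion]]) (auto simp: field_simps)
    also have "\<dots> \<in> convex hull W"
    proof (rule convex_sum_weights_le_1)
      show "(\<Sum>b\<in>B. m * \<bar>coord b x\<bar>) \<le> 1"
        using m(2)[of x] x by (simp add: sum_distrib_left)
    qed (use finite_basis m(1) in \<open>auto simp: W_def v_def intro!: hull_inc\<close>)
    finally show "x \<in> convex hull W" .
  qed
  moreover have "compact (convex hull W)"
    unfolding W_def using finite_basis by (intro finite_imp_compact_convex_hull) auto
  ultimately show ?thesis by (metis closed_cball compact_Int_closed inf.absorb_iff2)
qed

lemma sum_coord_squares_strictly_convex: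
  assumes "x \<noteq> y" "0 < u" "u < 1"
  shows "(\<Sum>b\<in>B. (coord b ((1 - u) *\<^sub>R x + u *\<^sub>R y))\<^sup>2)
    < (1 - u) * (\<Sum>b\<in>B. (coord b x)\<^sup>2) + u * (\<Sum>b\<in>B. (coord b y)\<^sup>2)"
proof -
  obtain b0 where "b0 \<in> B" "coord b0 x \<noteq> coord b0 y"
  proof (rule ccontr)
    assume "\<not> thesis"
    then have "(\<Sum>b\<in>B. coord b x *\<^sub>R b) = (\<Sum>b\<in>B. coord b y *\<^sub>R b)"
      using that by (intro sum.cong) auto
    then show False using assms(1) by (simp only: coord_expansion)
  qed
  then have pos: "0 < (\<Sum>b\<in>B. (coord b x - coord b y)\<^sup>2)"
    using finite_basis by (intro sum_pos2[where i=b0]) auto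
  have combination: "coord b ((1 - u) *\<^sub>R x + u *\<^sub>R y) = (1 - u) * coord b x + u * coord b y" for b
    using linear_add[OF linear_coord] coord_scale by simp
  have "(1 - u) * (\<Sum>b\<in>B. (coord b x)\<^sup>2) + u * (\<Sum>b\<in>B. (coord b y)\<^sup>2)
      - (\<Sum>b\<in>B. (coord b ((1 - u) *\<^sub>R x + u *\<^sub>R y))\<^sup>2)
    = (\<Sum>b\<in>B. (1 - u) * (coord b x)\<^sup>2 + u * (coord b y)\<^sup>2 - ((1 - u) * coord b x + u * coord b y)\<^sup>2)"
    (is "?gap = _")
    unfolding combination by (simp add: sum_distrib_left sum.distrib sum_subtractf)
  also have "\<dots> = (\<Sum>b\<in>B. u * (1 - u) * (coord b x - coord b y)\<^sup>2)"
    by (rule sum.cong) (simp_all add: power2_eq_square algebra_simps)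
  also have "\<dots> = u * (1 - u) * (\<Sum>b\<in>B. (coord b x - coord b y)\<^sup>2)"
    by (simp add: sum_distrib_left)
  finally have "?gap = u * (1 - u) * (\<Sum>b\<in>B. (coord b x - coord b y)\<^sup>2)" .
  moreover have "0 < u * (1 - u) * (\<Sum>b\<in>B. (coord b x - coord b y)\<^sup>2)"
    using assms pos by simp
  ultimately show ?thesis by linarith
qed

lemma linear_attains_max_at_extreme_point:
  fixes g :: "'a \<Rightarrow> real"
  assumes K: "compact K" "K \<noteq> {}" and g: "linear g"
  obtains p where "p extreme_point_of K" "\<And>v. v \<in> K \<Longrightarrow> g v \<le> g p"
proof -
  define q where "q x = (\<Sum>b\<in>B. (coord b x)\<^sup>2)" for x
  have cont: "continuous_on S (coord b)" "continuous_on S g" for S b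
    using linear_imp_bounded_linear[OF linear_coord] linear_imp_bounded_linear[OF g]
    by (simp_all add: linear_continuous_on)
  obtain v0 where v0: "v0 \<in> K" "\<And>w. w \<in> K \<Longrightarrow> g w \<le> g v0"
    using continuous_attains_sup[OF K cont(2)] by blast
  define M where "M = K \<inter> {x. g x = g v0}"
  have "closed {x. g x = g v0}"
    using cont(2) by (intro closed_Collect_eq continuous_on_const)
  then have "compact M" unfolding M_def by (intro compact_Int_closed K(1))
  moreover have "M \<noteq> {}" using v0 unfolding M_def by blast
  moreover have "continuous_on M q" unfolding q_def by (intro continuous_intros cont)
  ultimately obtain p where p: "p \<in> M" "\<And>w. w \<in> M \<Longrightarrow> q w \<le> q p"
    by (metis continuous_attains_sup)
  have "p \<notin> open_segment x y" if "x \<in> K" "y \<in> K" for x y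
  proof
    assume "p \<in> open_segment x y"
    then obtain u where xy: "x \<noteq> y" and u: "0 < u" "u < 1" and pu: "p = (1 - u) *\<^sub>R x + u *\<^sub>R y"
      by (auto simp: in_segment)
    have "g p = (1 - u) * g x + u * g y"
      unfolding pu using linear_add[OF g] linear_scale[OF g] by simp
    moreover have "g p = g v0" using p(1) unfolding M_def by blast
    ultimately have sum0: "(1 - u) * (g v0 - g x) + u * (g v0 - g y) = 0"
      by (simp add: algebra_simps)
    have "(1 - u) * (g v0 - g x) \<ge> 0" "u * (g v0 - g y) \<ge> 0"
      using v0(2) that u by simp_all
    then have "(1 - u) * (g v0 - g x) = 0" "u * (g v0 - g y) = 0"
      using sum0 by linarith+
    then have "x \<in> M" "y \<in> M" using that u unfolding M_def by auto
    then have "(1 - u) * q x \<le> (1 - u) * q p" "u * q y \<le> u * q p"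
      using p(2) u by (simp_all add: mult_left_mono)
    moreover have "q p < (1 - u) * q x + u * q y"
      unfolding q_def pu by (rule sum_coord_squares_strictly_convex[OF xy u])
    ultimately show False by (simp add: algebra_simps)
  qed
  then have "p extreme_point_of K" using p(1) unfolding M_def extreme_point_of_def by blast
  moreover have "g v \<le> g p" if "v \<in> K" for v using v0(2)[OF that] p(1) unfolding M_def by simp
  ultimately show ?thesis using that by blast
qed

end

lemma le_on_cball_if_le_on_extreme_points:
  fixes g :: "'a::real_normed_vector \<Rightarrow> real" and S :: "'a set"
  assumes "finite S" "span S = UNIV" "linear g"
    and extreme: "\<And>p. p extreme_point_of cball 0 1 \<Longrightarrow> g p \<le> a"
    and v: "v \<in> cball 0 1"
  shows "g v \<le> a"
proof -
  obtain B :: "'a set" where B: "finite B" "independent B" "span B = UNIV"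
    by (rule finite_spanning_imp_basis[OF assms(1,2)])
  have "cball (0::'a) 1 \<noteq> {}" by simp
  then obtain p where p: "p extreme_point_of cball 0 1" "\<And>v. v \<in> cball 0 1 \<Longrightarrow> g v \<le> g p"
    using linear_attains_max_at_extreme_point[OF B compact_unit_cball[OF B] _ assms(3)] by blast
  show ?thesis using extreme[OF p(1)] p(2)[OF v] by linarith
qed

lemma in_dual_ball_if_le_1_on_cball:
  fixes h :: "'a::real_normed_vector \<Rightarrow> real"
  assumes h: "linear h" and le: "\<And>v. v \<in> cball 0 1 \<Longrightarrow> h v \<le> 1"
  shows "h \<in> dual_ball"
proof -
  have "\<bar>h v\<bar> \<le> norm v" for v
  proof (cases "v = 0")
    case False
    have "h (v /\<^sub>R norm v) \<le> 1" "h (- (v /\<^sub>R norm v)) \<le> 1"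
      using False by (auto intro!: le)
    moreover have "h (v /\<^sub>R norm v) = h v / norm v" "h (- (v /\<^sub>R norm v)) = - (h v / norm v)"
      using linear_scale[OF h] linear_neg[OF h] by (simp_all add: divide_inverse mult.commute)
    ultimately have "h v / norm v \<le> 1" "-1 \<le> h v / norm v" by auto
    then have "h v \<le> norm v" "- norm v \<le> h v"
      using False by (simp_all add: divide_le_eq le_divide_eq)
    then show ?thesis by (simp add: abs_le_iff)
  qed (simp add: linear_0[OF h])
  then show ?thesis using h unfolding dual_ball_def by blast
qed

lemma subspace_L_set:
  assumes lin: "\<And>\<phi>. \<phi> \<in> E \<Longrightarrow> linear \<phi>"
  shows "subspace (L_set E)"
proof -
  have "L_set E = (\<Inter>\<phi>\<in>E. \<Inter>\<psi>\<in>E. {x. \<phi> x = \<psi> x})" by (auto simp: L_set_def)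
  moreover have "subspace {x. \<phi> x = \<psi> x}" if "\<phi> \<in> E" "\<psi> \<in> E" for \<phi> \<psi>
    using lin[OF that(1)] lin[OF that(2)] unfolding subspace_def
    by (simp add: linear_0 linear_add linear_scale)
  ultimately show ?thesis by (auto intro!: subspace_Inter)
qed

lemma F_face_subset_L_set: "F_face E \<subseteq> L_set E"
proof
  fix z assume "z \<in> F_face E"
  then have one: "\<phi> z = 1" if "\<phi> \<in> E" for \<phi> using that by (simp add: F_face_def)
  show "z \<in> L_set E" unfolding L_set_def
  proof (intro CollectI ballI)
    fix \<phi> \<psi> assume "\<phi> \<in> E" "\<psi> \<in> E"
    then show "\<phi> z = \<psi> z" using one[of \<phi>] one[of \<psi>] by simp
  qed
qed

lemma span_F_face_subset_L_set:
  assumes "\<And>\<phi>. \<phi> \<in> E \<Longrightarrow> linear \<phi>"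
  shows "span (F_face E) \<subseteq> L_set E"
  by (intro span_minimal F_face_subset_L_set subspace_L_set assms)

lemma normalized_in_F_face_duality_map:
  fixes y :: "'a::real_normed_vector"
  assumes "y \<noteq> 0"
  shows "y /\<^sub>R norm y \<in> F_face (duality_map y)"
  using assms
  by (auto simp: F_face_def duality_map_def dual_ball_def linear_scale divide_inverse
      mult.commute)

lemma duality_map_le_1_on_cball:
  assumes "\<phi> \<in> duality_map y" "v \<in> cball 0 1"
  shows "\<phi> v \<le> 1"
proof -
  have "\<bar>\<phi> v\<bar> \<le> norm v" using assms(1) unfolding duality_map_def dual_ball_def by blast
  then show ?thesis using assms(2) by (simp add: abs_le_iff)
qed

lemma duality_map_midpoint:
  assumes "\<phi> \<in> duality_map y" "\<psi> \<in> duality_map y"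
  shows "(\<lambda>v. (\<phi> v + \<psi> v) / 2) \<in> duality_map y"
proof -
  have "linear (\<lambda>v. (\<phi> v + \<psi> v) / 2)"
    using assms unfolding duality_map_def dual_ball_def
    by (intro linearI) (auto simp: linear_add linear_scale algebra_simps add_divide_distrib)
  moreover have "\<bar>(\<phi> v + \<psi> v) / 2\<bar> \<le> norm v" for v
  proof -
    have "\<bar>\<phi> v\<bar> \<le> norm v" "\<bar>\<psi> v\<bar> \<le> norm v"
      using assms unfolding duality_map_def dual_ball_def by auto
    then show ?thesis using abs_triangle_ineq[of "\<phi> v" "\<psi> v"] by simp
  qed
  ultimately show ?thesis
    using assms unfolding duality_map_def dual_ball_def by auto
qed

lemma duality_map_below_1_off_face:
  fixes y :: "'a::real_normed_vector"
  assumes "duality_map y \<noteq> {}" "finite Q" "Q \<subseteq> cball 0 1" "Q \<inter> F_face (duality_map y) = {}"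
  obtains \<phi> where "\<phi> \<in> duality_map y" "\<And>p. p \<in> Q \<Longrightarrow> \<phi> p < 1"
  using assms(2-4)
proof (induction Q arbitrary: thesis rule: finite_induct)
  case empty
  then show ?case using assms(1) by blast
next
  case (insert q Q)
  obtain \<phi> where \<phi>: "\<phi> \<in> duality_map y" "\<And>p. p \<in> Q \<Longrightarrow> \<phi> p < 1"
    using insert.IH insert.prems(2,3) by blast
  obtain \<psi> where \<psi>: "\<psi> \<in> duality_map y" "\<psi> q \<noteq> 1"
    using insert.prems(2,3) unfolding F_face_def by auto
  show ?case
  proof (rule insert.prems(1)[OF duality_map_midpoint[OF \<phi>(1) \<psi>(1)]])
    fix p assume p: "p \<in> insert q Q"
    then have "p \<in> cball 0 1" using insert.prems(2) by blast
    then have "\<phi> p \<le> 1" "\<psi> p \<le> 1"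
      using \<phi>(1) \<psi>(1) by (simp_all add: duality_map_le_1_on_cball)
    moreover have "p = q \<Longrightarrow> \<psi> p < 1" using \<psi>(2) calculation(2) by simp
    ultimately show "(\<phi> p + \<psi> p) / 2 < 1" using p \<phi>(2) by fastforce
  qed
qed

text \<open>The perturbation size is chosen below \<open>(1 - \<phi> p) / (\<bar>g p\<bar> + 1)\<close> at the finitely
many extreme points off the face; on the face itself \<open>g\<close> vanishes.\<close>

lemma perturbation_in_duality_map:
  fixes y :: "'a::real_normed_vector"
  assumes polyhedral: "polyhedral_normed_space TYPE('a)"
    and \<phi>: "\<phi> \<in> duality_map y"
    and below: "\<And>p. p extreme_point_of cball 0 1 \<Longrightarrow> p \<notin> F_face (duality_map y) \<Longrightarrow> \<phi> p < 1"
    and g: "linear g" "\<And>z. z \<in> F_face (duality_map y) \<Longrightarrow> g z = 0"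
  obtains \<epsilon> where "\<epsilon> > 0" "(\<lambda>v. \<phi> v + \<epsilon> * g v) \<in> duality_map y"
proof -
  obtain S :: "'a set" where S: "finite S" "span S = UNIV"
    and finite_extreme: "finite {p::'a. p extreme_point_of cball 0 1}"
    using polyhedral unfolding polyhedral_normed_space_def by blast
  define Q where "Q = {p. p extreme_point_of cball (0::'a) 1 \<and> p \<notin> F_face (duality_map y)}"
  define \<epsilon> where "\<epsilon> = Min (insert 1 ((\<lambda>p. (1 - \<phi> p) / (\<bar>g p\<bar> + 1)) ` Q))"
  have "finite Q" unfolding Q_def using finite_extreme by (rule finite_Collect_conjI[OF disjI1])
  then have \<epsilon>: "\<epsilon> > 0" "\<And>p. p \<in> Q \<Longrightarrow> \<epsilon> \<le> (1 - \<phi> p) / (\<bar>g p\<bar> + 1)"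
    unfolding \<epsilon>_def using below Q_def by (auto simp: Min_gr_iff)
  define h where "h v = \<phi> v + \<epsilon> * g v" for v
  have lin: "linear h"
    using \<phi> g(1) unfolding h_def duality_map_def dual_ball_def
    by (intro linearI) (auto simp: linear_add linear_scale algebra_simps)
  have "h p \<le> 1" if "p extreme_point_of cball 0 1" for p
  proof (cases "p \<in> Q")
    case True
    have "\<epsilon> * g p \<le> \<epsilon> * \<bar>g p\<bar>" using \<epsilon>(1) by (simp add: mult_left_mono)
    also have "\<dots> \<le> (1 - \<phi> p) / (\<bar>g p\<bar> + 1) * \<bar>g p\<bar>"
      using mult_right_mono[OF \<epsilon>(2)[OF True] abs_ge_zero] by simp
    also have "\<dots> \<le> 1 - \<phi> p"
      using below[of p] True unfolding Q_def by (simp add: field_simps)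
    finally show ?thesis unfolding h_def by simp
  next
    case False
    with that have "g p = 0" using g(2) unfolding Q_def by blast
    moreover have "p \<in> cball 0 1" using that extreme_point_of_def by blast
    ultimately show ?thesis unfolding h_def using duality_map_le_1_on_cball[OF \<phi>] by simp
  qed
  then have "h v \<le> 1" if "v \<in> cball 0 1" for v
    using le_on_cball_if_le_on_extreme_points[OF S lin _ that] by blast
  then have "h \<in> dual_ball" by (rule in_dual_ball_if_le_1_on_cball[OF lin])
  moreover have "g y = 0"
  proof (cases "y = 0")
    case False
    have "g (y /\<^sub>R norm y) = 0" using g(2) normalized_in_F_face_duality_map[OF False] .
    then show ?thesis using False linear_scale[OF g(1)] by simp
  qed (simp add: linear_0[OF g(1)])
  ultimately have "h \<in> duality_map y"
    using \<phi> unfolding h_def duality_map_def by simp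
  then show ?thesis using that \<epsilon>(1) unfolding h_def by blast
qed

lemma duality_map_below_1_at_extreme_points_off_face:
  fixes y :: "'a::real_normed_vector"
  assumes "polyhedral_normed_space TYPE('a)" "duality_map y \<noteq> {}"
  obtains \<phi> where "\<phi> \<in> duality_map y"
    "\<And>p. p extreme_point_of cball 0 1 \<Longrightarrow> p \<notin> F_face (duality_map y) \<Longrightarrow> \<phi> p < 1"
proof -
  let ?Q = "{p::'a. p extreme_point_of cball 0 1 \<and> p \<notin> F_face (duality_map y)}"
  have "finite ?Q"
    using assms(1) unfolding polyhedral_normed_space_def by (intro finite_Collect_conjI) simp
  moreover have "?Q \<subseteq> cball 0 1" by (auto simp: extreme_point_of_def)
  moreover have "?Q \<inter> F_face (duality_map y) = {}" by blast
  ultimately obtain \<phi> where "\<phi> \<in> duality_map y" "\<And>p. p \<in> ?Q \<Longrightarrow> \<phi> p < 1"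
    by (rule duality_map_below_1_off_face[OF assms(2)]) blast
  then show ?thesis using that by blast
qed

lemma L_set_subset_span_F_face:
  fixes y :: "'a::real_normed_vector"
  assumes polyhedral: "polyhedral_normed_space TYPE('a)"
  shows "L_set (duality_map y) \<subseteq> span (F_face (duality_map y))"
proof
  let ?E = "duality_map y" and ?F = "F_face (duality_map y)"
  fix x assume x: "x \<in> L_set ?E"
  show "x \<in> span ?F"
  proof (cases "?E = {}")
    case True
    \<comment> \<open>impossible by Hahn--Banach, but harmless: \<open>F\<^sub>E\<close> is then the whole unit ball\<close>
    then have "?F = cball 0 1" unfolding F_face_def by blast
    then show ?thesis by (simp add: span_unit_cball)
  next
    case False
    obtain \<phi> where \<phi>: "\<phi> \<in> ?E" "\<And>p. p extreme_point_of cball 0 1 \<Longrightarrow> p \<notin> ?F \<Longrightarrow> \<phi> p < 1"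
      by (rule duality_map_below_1_at_extreme_points_off_face[OF polyhedral False]) blast
    show ?thesis
    proof (rule ccontr)
      assume "x \<notin> span ?F"
      then obtain g :: "'a \<Rightarrow> real"
        where g: "linear g" "g x = 1" "\<And>z. z \<in> span ?F \<Longrightarrow> g z = 0"
        by (rule linear_functional_separating_from_span) auto
      have "g z = 0" if "z \<in> ?F" for z
        using g(3)[OF span_base[OF that]] .
      then obtain \<epsilon> where \<epsilon>: "\<epsilon> > 0" "(\<lambda>v. \<phi> v + \<epsilon> * g v) \<in> ?E"
        using perturbation_in_duality_map[OF polyhedral \<phi> g(1)] by blast
      have "\<forall>\<psi>\<in>?E. \<forall>\<theta>\<in>?E. \<psi> x = \<theta> x" using x unfolding L_set_def by blast
      then have "\<phi> x + \<epsilon> * g x = \<phi> x" using \<epsilon>(2) \<phi>(1) by fastforce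
      then show False using g(2) \<epsilon>(1) by simp
    qed
  qed
qed

theorem lemma2p3:
  fixes y :: "'a::real_normed_vector"
  assumes "polyhedral_normed_space TYPE('a)"
  shows "L_set (duality_map y) = span (F_face (duality_map y))"
proof
  show "L_set (duality_map y) \<subseteq> span (F_face (duality_map y))"
    by (rule L_set_subset_span_F_face[OF assms])
  show "span (F_face (duality_map y)) \<subseteq> L_set (duality_map y)"
    by (rule span_F_face_subset_L_set) (simp add: duality_map_def dual_ball_def)
qed

end
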